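(* Let $G$ be a finite group. Then $K(G)=G$ if and only if $G$ is abelian or $G$ is quasi-simple.
   Context: For $\chi\in\mathrm{Irr}(G)$, the center of $\chi$ is $Z(\chi)=\{g\in G : |\chi(g)|=\chi(1)\}$. For a nonabelian group $G$, let $\mathcal{X}=\{\chi\in\mathrm{Irr}(G) : Z(\chi)>Z(G)\}$ (strict containment) and define $K(G)=\bigcap_{\chi\in\mathcal{X}}\ker(\chi)$; if $G$ is abelian, set $K(G)=G$. A group $G$ is quasi-simple if $G'=G$ and $G/Z(G)$ is nonabelian simple. *)

theory Defs
  imports "HOL-Algebra.Algebra" "Jordan_Normal_Form.Matrix"
begin

definition mat_trace :: "complex mat \<Rightarrow> complex" where
  "mat_trace A = (\<Sum>i<dim_row A. A $$ (i, i))"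

definition is_rep :: "('a, 'b) monoid_scheme \<Rightarrow> nat \<Rightarrow> ('a \<Rightarrow> complex mat) \<Rightarrow> bool" where
  "is_rep G n \<rho> \<longleftrightarrow> n \<ge> 1
     \<and> (\<forall>g \<in> carrier G. \<rho> g \<in> carrier_mat n n)
     \<and> \<rho> \<one>\<^bsub>G\<^esub> = 1\<^sub>m n
     \<and> (\<forall>g \<in> carrier G. \<forall>h \<in> carrier G. \<rho> (g \<otimes>\<^bsub>G\<^esub> h) = \<rho> g * \<rho> h)"

definition is_subspace :: "nat \<Rightarrow> complex vec set \<Rightarrow> bool" where
  "is_subspace n W \<longleftrightarrow> W \<subseteq> carrier_vec n \<and> 0\<^sub>v n \<in> W
     \<and> (\<forall>v \<in> W. \<forall>w \<in> W. v + w \<in> W)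
     \<and> (\<forall>c. \<forall>v \<in> W. c \<cdot>\<^sub>v v \<in> W)"

definition is_irr_rep :: "('a, 'b) monoid_scheme \<Rightarrow> nat \<Rightarrow> ('a \<Rightarrow> complex mat) \<Rightarrow> bool" where
  "is_irr_rep G n \<rho> \<longleftrightarrow> is_rep G n \<rho>
     \<and> (\<forall>W. is_subspace n W \<and> (\<forall>g \<in> carrier G. \<forall>w \<in> W. \<rho> g *\<^sub>v w \<in> W)
            \<longrightarrow> W = {0\<^sub>v n} \<or> W = carrier_vec n)"

definition Irr :: "('a, 'b) monoid_scheme \<Rightarrow> ('a \<Rightarrow> complex) set" where
  "Irr G = {\<chi>. \<exists>n \<rho>. is_irr_rep G n \<rho>
              \<and> \<chi> = (\<lambda>g. if g \<in> carrier G then mat_trace (\<rho> g) else 0)}"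

definition char_center :: "('a, 'b) monoid_scheme \<Rightarrow> ('a \<Rightarrow> complex) \<Rightarrow> 'a set" where
  "char_center G \<chi> = {g \<in> carrier G. complex_of_real (cmod (\<chi> g)) = \<chi> \<one>\<^bsub>G\<^esub>}"

definition char_ker :: "('a, 'b) monoid_scheme \<Rightarrow> ('a \<Rightarrow> complex) \<Rightarrow> 'a set" where
  "char_ker G \<chi> = {g \<in> carrier G. \<chi> g = \<chi> \<one>\<^bsub>G\<^esub>}"

definition group_center :: "('a, 'b) monoid_scheme \<Rightarrow> 'a set" where
  "group_center G = {z \<in> carrier G. \<forall>g \<in> carrier G. z \<otimes>\<^bsub>G\<^esub> g = g \<otimes>\<^bsub>G\<^esub> z}"

definition K_grp :: "('a, 'b) monoid_scheme \<Rightarrow> 'a set" where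
  "K_grp G = (if comm_group G then carrier G
     else carrier G \<inter> \<Inter>{char_ker G \<chi> | \<chi>. \<chi> \<in> Irr G \<and> group_center G \<subset> char_center G \<chi>})"

definition quasi_simple :: "('a, 'b) monoid_scheme \<Rightarrow> bool" where
  "quasi_simple G \<longleftrightarrow> derived G (carrier G) = carrier G
     \<and> simple_group (G Mod group_center G) \<and> \<not> comm_group (G Mod group_center G)"

end

theory Submission
  imports Defs "Jordan_Normal_Form.Jordan_Normal_Form_Existence" "Jordan_Normal_Form.VS_Connect"
begin

text \<open>For an irreducible representation \<open>\<rho>\<close> with character \<open>\<chi>\<close>, the centre \<open>Z(\<chi>)\<close> is the set
  of \<open>g\<close> for which \<open>\<rho>(g)\<close> commutes with all of \<open>\<rho>(G)\<close>: such a \<open>\<rho>(g)\<close> is scalar by Schur's lemma,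
  and conversely a matrix of finite order whose trace has modulus equal to the degree is scalar,
  as its Jordan form shows. So \<open>Z(\<chi>)\<close> is a normal subgroup containing \<open>Z(G)\<close>, and it is all
  of \<open>G\<close> exactly when \<open>G' \<subseteq> ker \<rho>\<close>.

  If \<open>G\<close> is quasi-simple and \<open>Z(\<chi>) > Z(G)\<close>, simplicity of \<open>G/Z(G)\<close> forces \<open>Z(\<chi>) = G\<close>, hence
  \<open>G = G' \<subseteq> ker \<chi>\<close>. Conversely, suppose \<open>K(G) = G\<close> with \<open>G\<close> nonabelian. For a proper normal
  subgroup \<open>N\<close>, an irreducible constituent of the regular representation of \<open>G/N\<close>, lifted to \<open>G\<close>,
  gives a \<open>\<chi>\<close> trivial on \<open>N\<close> but not on \<open>G\<close>. Such a \<open>\<chi>\<close> cannot satisfy \<open>Z(\<chi>) > Z(G)\<close>, so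
  \<open>N \<subseteq> ker \<rho> \<subseteq> Z(\<chi>) = Z(G)\<close>, and \<open>G'\<close> is not contained in \<open>N\<close> since \<open>Z(G) \<noteq> G\<close>. Taking
  \<open>N = G'\<close> shows that \<open>G\<close> is perfect, and taking \<open>N \<supseteq> Z(G)\<close> that \<open>G/Z(G)\<close> is simple.\<close>

section \<open>Traces and matrices of finite order\<close>

lemma mat_trace_mult_commute:
  assumes A: "A \<in> carrier_mat n m" and B: "B \<in> carrier_mat m n"
  shows "mat_trace (A * B) = mat_trace (B * A)"
proof -
  have "mat_trace (A * B) = (\<Sum>i<n. \<Sum>j<m. A $$ (i,j) * B $$ (j,i))"
    using A B by (auto simp: mat_trace_def scalar_prod_def lessThan_atLeast0 intro!: sum.cong)
  also have "\<dots> = (\<Sum>j<m. \<Sum>i<n. B $$ (j,i) * A $$ (i,j))"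
    by (subst sum.swap) (simp add: mult.commute)
  also have "\<dots> = mat_trace (B * A)"
    using A B by (auto simp: mat_trace_def scalar_prod_def lessThan_atLeast0 intro!: sum.cong)
  finally show ?thesis .
qed

lemma mat_trace_similar_mat_wit:
  assumes "similar_mat_wit A B P Q"
  shows "mat_trace A = mat_trace B"
proof -
  note wit = similar_mat_witD[OF refl assms]
  define n where "n = dim_row A"
  have B: "B \<in> carrier_mat n n" and P: "P \<in> carrier_mat n n" and Q: "Q \<in> carrier_mat n n"
    and QP: "Q * P = 1\<^sub>m n" and A: "A = P * B * Q"
    using wit unfolding n_def by blast+
  have "mat_trace A = mat_trace (P * (B * Q))"
    using A assoc_mult_mat[OF P B Q] by simp
  also have "\<dots> = mat_trace (B * Q * P)"
    using B P Q by (intro mat_trace_mult_commute) auto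
  also have "B * Q * P = B"
    using assoc_mult_mat[OF B Q P] QP right_mult_one_mat[OF B] by simp
  finally show ?thesis .
qed

lemma mat_trace_one [simp]: "mat_trace (1\<^sub>m n) = of_nat n"
  by (simp add: mat_trace_def)

lemma mat_trace_smult_one [simp]: "mat_trace (c \<cdot>\<^sub>m 1\<^sub>m n) = c * of_nat n"
  by (simp add: mat_trace_def)

lemma smult_one_pow_mat: "(c \<cdot>\<^sub>m 1\<^sub>m n) ^\<^sub>m k = (c ^ k) \<cdot>\<^sub>m (1\<^sub>m n :: 'a :: comm_ring_1 mat)"
  by (induct k) (auto intro!: eq_matI simp: scalar_prod_def if_distrib sum.delta' cong: if_cong)

lemma mult_unit_vec_eq_col:
  fixes A :: "'a :: semiring_1 mat"
  assumes "A \<in> carrier_mat n m" and "j < m"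
  shows "A *\<^sub>v unit_vec m j = col A j"
  using assms by (intro eq_vecI) (auto simp: scalar_prod_def if_distrib sum.delta' cong: if_cong)

lemma eq_mean_if_norm_sum_of_units_eq_card:
  fixes a :: "nat \<Rightarrow> complex"
  assumes m: "m > 0" and a: "\<And>i. i < m \<Longrightarrow> cmod (a i) = 1"
    and s: "cmod (\<Sum>i<m. a i) = real m" and i: "i < m"
  shows "a i = (\<Sum>i<m. a i) / of_nat m"
proof -
  define c where "c = (\<Sum>i<m. a i) / of_nat m"
  have "cmod c = 1" using s m by (simp add: c_def norm_divide)
  hence c_cnj: "c * cnj c = 1"
    by (metis complex_norm_square mult.commute of_real_1 power_one)
  \<comment> \<open>rotate the mean to \<open>1\<close>: then each \<open>Re (b i) \<le> 1\<close>, and the real parts sum to \<open>m\<close>\<close>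
  define b where "b i = a i * cnj c" for i
  have b_norm: "cmod (b i) = 1" if "i < m" for i
    using a[OF that] \<open>cmod c = 1\<close> by (simp add: b_def norm_mult)
  have "(\<Sum>i<m. a i) = of_nat m * c"
    using m by (simp add: c_def)
  hence "(\<Sum>i<m. b i) = of_nat m * (c * cnj c)"
    by (simp add: b_def mult.assoc flip: sum_distrib_right)
  hence "(\<Sum>i<m. b i) = of_nat m"
    using c_cnj by simp
  hence "(\<Sum>i<m. 1 - Re (b i)) = 0"
    by (simp add: sum_subtractf flip: Re_sum)
  moreover have "\<forall>i\<in>{..<m}. 0 \<le> 1 - Re (b i)"
    using b_norm complex_Re_le_cmod by (metis diff_ge_0_iff_ge lessThan_iff)
  ultimately have Re_b: "Re (b i) = 1"
    using sum_nonneg_eq_0_iff[of "{..<m}" "\<lambda>i. 1 - Re (b i)"] i by auto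
  have "(Re (b i))\<^sup>2 + (Im (b i))\<^sup>2 = 1"
    using b_norm[OF i] cmod_power2[of "b i"] by simp
  hence "b i = 1" using Re_b by (simp add: complex_eq_iff)
  moreover have "b i * c = a i * (c * cnj c)" by (simp add: b_def ac_simps)
  ultimately have "a i = c" using c_cnj by simp
  thus ?thesis by (simp only: c_def)
qed

lemma four_block_mat_eq_one:
  assumes A: "A \<in> carrier_mat n n" and B: "B \<in> carrier_mat n m"
    and C: "C \<in> carrier_mat m n" and D: "D \<in> carrier_mat m m"
    and eq: "four_block_mat A B C D = 1\<^sub>m (n + m)"
  shows "A = 1\<^sub>m n" and "D = 1\<^sub>m m"
proof -
  have entry: "four_block_mat A B C D $$ (i, j) = (if i = j then 1 else 0)"
    if "i < n + m" "j < n + m" for i j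
    using that by (simp add: eq)
  show "A = 1\<^sub>m n"
  proof (rule eq_matI)
    fix i j assume "i < dim_row (1\<^sub>m n)" "j < dim_col (1\<^sub>m n)"
    thus "A $$ (i, j) = 1\<^sub>m n $$ (i, j)"
      using entry[of i j] A B C D by auto
  qed (use A in auto)
  show "D = 1\<^sub>m m"
  proof (rule eq_matI)
    fix i j assume "i < dim_row (1\<^sub>m m)" "j < dim_col (1\<^sub>m m)"
    thus "D $$ (i, j) = 1\<^sub>m m $$ (i, j)"
      using entry[of "i + n" "j + n"] A B C D by auto
  qed (use D in auto)
qed

lemma diag_block_mat_eq_one:
  assumes "\<forall>A \<in> set As. dim_col A = dim_row A"
    and "diag_block_mat As = 1\<^sub>m (sum_list (map dim_row As))" and "A \<in> set As"
  shows "A = 1\<^sub>m (dim_row A)"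
  using assms
proof (induct As)
  case (Cons A' As)
  let ?B = "diag_block_mat As"
  let ?m = "sum_list (map dim_row As)"
  have "sum_list (map dim_col As) = ?m"
    using Cons(2) by (induct As) auto
  hence B: "?B \<in> carrier_mat ?m ?m"
    using dim_diag_block_mat[of As] by auto
  have A': "A' \<in> carrier_mat (dim_row A') (dim_row A')"
    using Cons(2) by auto
  have "four_block_mat A' (0\<^sub>m (dim_row A') ?m) (0\<^sub>m ?m (dim_row A')) ?B = 1\<^sub>m (dim_row A' + ?m)"
    using Cons(2,3) B by (simp add: Let_def)
  note blocks = four_block_mat_eq_one[OF A' _ _ B this]
  show ?case using Cons(1,2,4) blocks by auto
qed simp

lemma jordan_block_pow_eq_one:
  fixes a :: "'a :: {idom, ring_char_0}"
  assumes k: "0 < k" and s: "0 < s" and pow: "jordan_block s a ^\<^sub>m k = 1\<^sub>m s"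
  shows "s = 1" and "a ^ k = 1"
proof -
  have entry: "(jordan_block s a ^\<^sub>m k) $$ (i, j) = (if i = j then 1 else 0)"
    if "i < s" "j < s" for i j
    using that by (simp add: pow)
  show ak: "a ^ k = 1"
    using entry[of 0 0] s by (simp add: jordan_block_pow)
  show "s = 1"
  proof (rule ccontr)
    assume "s \<noteq> 1"
    \<comment> \<open>the superdiagonal entry of the \<open>k\<close>-th power is \<open>k a\<^sup>k\<^sup>-\<^sup>1 \<noteq> 0\<close>\<close>
    hence "of_nat k * a ^ (k - 1) = 0"
      using entry[of 0 1] s by (simp add: jordan_block_pow)
    moreover have "a \<noteq> 0" using ak k by (auto simp: zero_power)
    ultimately show False using k by simp
  qed
qed

lemma jordan_matrix_pow_eq_one:
  fixes n_as :: "(nat \<times> 'a :: {idom, ring_char_0}) list"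
  assumes "0 \<notin> fst ` set n_as" and k: "0 < k"
    and pow: "jordan_matrix n_as ^\<^sub>m k = 1\<^sub>m (sum_list (map fst n_as))"
    and sa: "(s, a) \<in> set n_as"
  shows "s = 1" and "a ^ k = 1"
proof -
  let ?Bs = "map (\<lambda>(n, a). jordan_block n a ^\<^sub>m k) n_as"
  have "sum_list (map dim_row ?Bs) = sum_list (map fst n_as)"
    by (induct n_as) auto
  hence "diag_block_mat ?Bs = 1\<^sub>m (sum_list (map dim_row ?Bs))"
    using pow by (simp add: jordan_matrix_pow)
  hence "jordan_block s a ^\<^sub>m k = 1\<^sub>m s"
    using diag_block_mat_eq_one[of ?Bs "jordan_block s a ^\<^sub>m k"] sa by force
  moreover have "0 < s" using assms(1) sa by (metis fst_conv gr0I image_eqI)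
  ultimately show "s = 1" and "a ^ k = 1"
    using jordan_block_pow_eq_one[OF k] by auto
qed

lemma jordan_matrix_diagonal:
  assumes "\<forall>(s, a) \<in> set n_as. s = 1"
  shows "jordan_matrix n_as =
    mat (length n_as) (length n_as) (\<lambda>(i, j). if i = j then snd (n_as ! i) else 0)"
  using assms
proof (induct n_as)
  case Nil
  show ?case by (rule eq_matI) (auto simp: jordan_matrix_def)
next
  case (Cons sa n_as)
  obtain s a where sa: "sa = (s, a)" by force
  have s: "s = 1" using Cons(2) sa by auto
  have m: "sum_list (map fst n_as) = length n_as"
    using Cons(2) by (induct n_as) auto
  have IH: "jordan_matrix n_as =
      mat (length n_as) (length n_as) (\<lambda>(i, j). if i = j then snd (n_as ! i) else 0)"
    using Cons by auto
  show ?case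
    unfolding sa s jordan_matrix_Cons m IH
    by (rule eq_matI) (auto simp: nth_Cons' jordan_block_def)
qed

lemma finite_order_mat_diagonalizable:
  fixes A :: "complex mat"
  assumes A: "A \<in> carrier_mat n n" and k: "0 < k" and pow: "A ^\<^sub>m k = 1\<^sub>m n"
  shows "\<exists>e P Q. similar_mat_wit A (mat n n (\<lambda>(i, j). if i = j then e i else 0)) P Q
    \<and> (\<forall>i < n. e i ^ k = 1)"
proof -
  obtain as where "char_poly A = (\<Prod>a\<leftarrow>as. [:- a, 1:])"
    using char_poly_factorized[OF A] by auto
  then obtain n_as where jnf: "jordan_nf A n_as"
    using jordan_nf_exists[OF A] by blast
  let ?J = "jordan_matrix n_as"
  obtain P Q where wit: "similar_mat_wit A ?J P Q"
    using jnf unfolding jordan_nf_def similar_mat_def by auto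
  note wit_facts = similar_mat_witD2[OF A wit]
  have size: "sum_list (map fst n_as) = n"
    using wit_facts(5) by (metis carrier_matD(1) jordan_matrix_dim(1))
  have "?J ^\<^sub>m k = Q * A ^\<^sub>m k * P"
    by (rule similar_mat_wit_pow_id[OF similar_mat_wit_sym[OF wit]])
  also have "\<dots> = 1\<^sub>m n"
    using wit_facts(2,6,7) unfolding pow by simp
  finally have blocks: "s = 1 \<and> a ^ k = 1" if "(s, a) \<in> set n_as" for s a
    using jordan_matrix_pow_eq_one[OF _ k _ that] jnf size unfolding jordan_nf_def by auto
  have ones: "\<forall>(s, a) \<in> set n_as. s = 1"
    using blocks by auto
  have len: "length n_as = n"
    using ones size by (induct n_as arbitrary: n) auto
  define e where "e i = snd (n_as ! i)" for i
  have "?J = mat n n (\<lambda>(i, j). if i = j then e i else 0)"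
    unfolding e_def by (simp add: jordan_matrix_diagonal[OF ones] len)
  moreover have "e i ^ k = 1" if "i < n" for i
  proof -
    have "n_as ! i \<in> set n_as" using that len by simp
    thus ?thesis using blocks[of "fst (n_as ! i)" "e i"] unfolding e_def by simp
  qed
  ultimately show ?thesis using wit by auto
qed

lemma scalar_if_pow_eq_one_and_norm_trace_eq:
  fixes A :: "complex mat"
  assumes A: "A \<in> carrier_mat n n" and n: "0 < n" and k: "0 < k"
    and pow: "A ^\<^sub>m k = 1\<^sub>m n" and tr: "cmod (mat_trace A) = real n"
  shows "\<exists>c. A = c \<cdot>\<^sub>m 1\<^sub>m n"
proof -
  obtain e P Q where wit: "similar_mat_wit A (mat n n (\<lambda>(i, j). if i = j then e i else 0)) P Q"
    and roots: "\<forall>i < n. e i ^ k = 1"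
    using finite_order_mat_diagonalizable[OF A k pow] by blast
  note wit_facts = similar_mat_witD2[OF A wit]
  have e_unit: "cmod (e i) = 1" if "i < n" for i
    using roots power_eq_1_iff[of "e i" k] k that by auto
  have "mat_trace A = (\<Sum>i<n. e i)"
    unfolding mat_trace_similar_mat_wit[OF wit] by (simp add: mat_trace_def)
  hence norm_sum: "cmod (\<Sum>i<n. e i) = real n"
    using tr by simp
  define c where "c = (\<Sum>i<n. e i) / of_nat n"
  have e_const: "e i = c" if "i < n" for i
    unfolding c_def by (rule eq_mean_if_norm_sum_of_units_eq_card[OF n e_unit norm_sum that])
  have "mat n n (\<lambda>(i, j). if i = j then e i else 0) = c \<cdot>\<^sub>m 1\<^sub>m n"
    by (rule eq_matI) (auto simp: e_const)
  hence "A = P * (c \<cdot>\<^sub>m 1\<^sub>m n) * Q"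
    using wit_facts(3) by simp
  also have "\<dots> = (c \<cdot>\<^sub>m P) * Q"
    using mult_smult_distrib[OF wit_facts(6) one_carrier_mat, of c] wit_facts(6) by simp
  also have "\<dots> = c \<cdot>\<^sub>m (P * Q)"
    by (rule mult_smult_assoc_mat[OF wit_facts(6,7)])
  finally show ?thesis using wit_facts(1) by (intro exI[of _ c]) simp
qed

section \<open>Representations as group homomorphisms\<close>

lemma (in group) inv_commute:
  assumes a: "a \<in> carrier G" and b: "b \<in> carrier G" and ab: "a \<otimes> b = b \<otimes> a"
  shows "inv a \<otimes> b = b \<otimes> inv a"
proof -
  have "a \<otimes> (b \<otimes> inv a) = (b \<otimes> a) \<otimes> inv a"
    using a b by (simp add: m_assoc[symmetric] ab)
  also have "\<dots> = b"
    using a b by (simp add: m_assoc)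
  finally show ?thesis
    using a b by (simp add: inv_solve_left')
qed

lemma (in group) commutator_eq_one:
  "a \<in> carrier G \<Longrightarrow> b \<in> carrier G \<Longrightarrow> a \<otimes> b = b \<otimes> a \<Longrightarrow> a \<otimes> b \<otimes> inv a \<otimes> inv b = \<one>"
  by (simp add: m_assoc)

lemma (in group_hom) centralising_preimage_normal:
  "{x \<in> carrier G. \<forall>y \<in> carrier G. h x \<otimes>\<^bsub>H\<^esub> h y = h y \<otimes>\<^bsub>H\<^esub> h x} \<lhd> G"
  (is "?C \<lhd> G")
proof -
  have C: "h x \<otimes>\<^bsub>H\<^esub> h y = h y \<otimes>\<^bsub>H\<^esub> h x" if "x \<in> ?C" "y \<in> carrier G" for x y
    using that by blast
  have "subgroup ?C G"
  proof (rule G.subgroupI)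
    show "?C \<noteq> {}" by force
  next
    fix x assume x: "x \<in> ?C"
    hence xc: "x \<in> carrier G" by simp
    have "h (inv x) \<otimes>\<^bsub>H\<^esub> h y = h y \<otimes>\<^bsub>H\<^esub> h (inv x)" if y: "y \<in> carrier G" for y
      using H.inv_commute[OF _ _ C[OF x y]] xc y by simp
    thus "inv x \<in> ?C" using xc by simp
  next
    fix x x' assume x: "x \<in> ?C" and x': "x' \<in> ?C"
    hence xc: "x \<in> carrier G" and x'c: "x' \<in> carrier G" by simp_all
    have "h (x \<otimes> x') \<otimes>\<^bsub>H\<^esub> h y = h y \<otimes>\<^bsub>H\<^esub> h (x \<otimes> x')" if y: "y \<in> carrier G" for y
    proof -
      have "h (x \<otimes> x') \<otimes>\<^bsub>H\<^esub> h y = h x \<otimes>\<^bsub>H\<^esub> (h x' \<otimes>\<^bsub>H\<^esub> h y)"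
        using xc x'c y by (simp add: H.m_assoc)
      also have "\<dots> = (h x \<otimes>\<^bsub>H\<^esub> h y) \<otimes>\<^bsub>H\<^esub> h x'"
        using xc x'c y by (simp add: C[OF x' y] H.m_assoc)
      also have "\<dots> = h y \<otimes>\<^bsub>H\<^esub> h (x \<otimes> x')"
        using xc x'c y by (simp add: C[OF x y] H.m_assoc)
      finally show ?thesis .
    qed
    thus "x \<otimes> x' \<in> ?C" using xc x'c by simp
  qed auto
  moreover have "g \<otimes> x \<otimes> inv g \<in> ?C" if g: "g \<in> carrier G" and x: "x \<in> ?C" for g x
  proof -
    have xc: "x \<in> carrier G" using x by simp
    have "h (g \<otimes> x \<otimes> inv g) = (h g \<otimes>\<^bsub>H\<^esub> h x) \<otimes>\<^bsub>H\<^esub> inv\<^bsub>H\<^esub> h g"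
      using g xc by simp
    also have "\<dots> = h x"
      using g xc by (simp add: C[OF x g, symmetric] H.m_assoc)
    finally show ?thesis using g x by simp
  qed
  ultimately show ?thesis by (simp add: G.normal_inv_iff)
qed

lemma (in group_hom) derived_subset_kernel_iff:
  "derived G (carrier G) \<subseteq> kernel G H h \<longleftrightarrow>
    (\<forall>x \<in> carrier G. \<forall>y \<in> carrier G. h x \<otimes>\<^bsub>H\<^esub> h y = h y \<otimes>\<^bsub>H\<^esub> h x)"
proof
  assume der: "derived G (carrier G) \<subseteq> kernel G H h"
  show "\<forall>x \<in> carrier G. \<forall>y \<in> carrier G. h x \<otimes>\<^bsub>H\<^esub> h y = h y \<otimes>\<^bsub>H\<^esub> h x"
  proof (intro ballI)
    fix x y assume x: "x \<in> carrier G" and y: "y \<in> carrier G"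
    define c where "c = x \<otimes> y \<otimes> inv x \<otimes> inv y"
    have "c \<in> derived G (carrier G)"
      unfolding derived_def c_def by (rule generate.incl) (use x y in blast)
    hence hc: "h c = \<one>\<^bsub>H\<^esub>" using der by (auto simp: kernel_def)
    have c: "c \<in> carrier G" using x y by (simp add: c_def)
    have "c = (x \<otimes> y) \<otimes> inv (y \<otimes> x)"
      using x y by (simp add: c_def G.m_assoc G.inv_mult_group)
    hence "x \<otimes> y = c \<otimes> (y \<otimes> x)"
      using x y c G.inv_solve_right[of c "x \<otimes> y" "y \<otimes> x"] by simp
    hence "h x \<otimes>\<^bsub>H\<^esub> h y = h c \<otimes>\<^bsub>H\<^esub> (h y \<otimes>\<^bsub>H\<^esub> h x)"
      using x y c by (metis G.m_closed hom_mult)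
    thus "h x \<otimes>\<^bsub>H\<^esub> h y = h y \<otimes>\<^bsub>H\<^esub> h x"
      using x y by (simp add: hc)
  qed
next
  assume comm: "\<forall>x \<in> carrier G. \<forall>y \<in> carrier G. h x \<otimes>\<^bsub>H\<^esub> h y = h y \<otimes>\<^bsub>H\<^esub> h x"
  have "derived_set G (carrier G) \<subseteq> kernel G H h"
  proof
    fix c assume "c \<in> derived_set G (carrier G)"
    then obtain x y where x: "x \<in> carrier G" and y: "y \<in> carrier G"
      and c: "c = x \<otimes> y \<otimes> inv x \<otimes> inv y" by blast
    have "h c = h x \<otimes>\<^bsub>H\<^esub> h y \<otimes>\<^bsub>H\<^esub> inv\<^bsub>H\<^esub> h x \<otimes>\<^bsub>H\<^esub> inv\<^bsub>H\<^esub> h y"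
      using x y by (simp add: c)
    also have "\<dots> = \<one>\<^bsub>H\<^esub>"
      using x y comm by (intro H.commutator_eq_one) auto
    finally show "c \<in> kernel G H h"
      using x y c by (simp add: kernel_def)
  qed
  thus "derived G (carrier G) \<subseteq> kernel G H h"
    unfolding derived_def by (rule G.generate_subgroup_incl[OF _ subgroup_kernel])
qed

definition GL :: "nat \<Rightarrow> complex mat monoid" where
  "GL n = units_of (ring_mat TYPE(complex) n ())"

lemma group_GL: "group (GL n)"
proof -
  interpret semiring "ring_mat TYPE(complex) n ()" by (rule semiring_mat)
  show ?thesis unfolding GL_def by (rule units_group)
qed

lemma mult_GL [simp]: "A \<otimes>\<^bsub>GL n\<^esub> B = A * B"
  and one_GL [simp]: "\<one>\<^bsub>GL n\<^esub> = 1\<^sub>m n"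
  by (simp_all add: GL_def units_of_def ring_mat_simps)

lemma nat_pow_GL: "A \<in> carrier_mat n n \<Longrightarrow> A [^]\<^bsub>GL n\<^esub> k = A ^\<^sub>m k"
  by (induct k) simp_all

lemma rep_carrier: "is_rep G n \<rho> \<Longrightarrow> g \<in> carrier G \<Longrightarrow> \<rho> g \<in> carrier_mat n n"
  unfolding is_rep_def by auto

lemma rep_mult: "is_rep G n \<rho> \<Longrightarrow> g \<in> carrier G \<Longrightarrow> h \<in> carrier G \<Longrightarrow> \<rho> (g \<otimes>\<^bsub>G\<^esub> h) = \<rho> g * \<rho> h"
  unfolding is_rep_def by auto

lemma rep_one: "is_rep G n \<rho> \<Longrightarrow> \<rho> \<one>\<^bsub>G\<^esub> = 1\<^sub>m n"
  unfolding is_rep_def by auto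

lemma rep_degree_pos: "is_rep G n \<rho> \<Longrightarrow> 0 < n"
  unfolding is_rep_def by auto

lemma rep_group_hom:
  assumes G: "group G" and rep: "is_rep G n \<rho>"
  shows "group_hom G (GL n) \<rho>"
proof -
  interpret G: group G by (rule G)
  have "\<rho> g \<in> carrier (GL n)" if g: "g \<in> carrier G" for g
  proof -
    have "\<rho> g * \<rho> (inv\<^bsub>G\<^esub> g) = 1\<^sub>m n" and "\<rho> (inv\<^bsub>G\<^esub> g) * \<rho> g = 1\<^sub>m n"
      using g rep_mult[OF rep] rep_one[OF rep] by (simp_all flip: rep_mult[OF rep])
    thus ?thesis
      using g rep_carrier[OF rep] unfolding GL_def units_of_carrier Units_def ring_mat_simps
      by blast
  qed
  thus ?thesis
    using rep_mult[OF rep] by (intro group_hom.intro group_hom_axioms.intro G group_GL) (auto simp: hom_def)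
qed

lemma rep_pow_order:
  assumes "group G" and "finite (carrier G)" and rep: "is_rep G n \<rho>" and g: "g \<in> carrier G"
  shows "\<rho> g ^\<^sub>m card (carrier G) = 1\<^sub>m n"
proof -
  interpret group_hom G "GL n" \<rho> by (rule rep_group_hom[OF assms(1) rep])
  have "\<rho> (g [^]\<^bsub>G\<^esub> card (carrier G)) = 1\<^sub>m n"
    using G.pow_order_eq_1[OF g] by (simp add: Coset.order_def)
  thus ?thesis using hom_nat_pow[OF g] nat_pow_GL[OF rep_carrier[OF rep g]] by simp
qed

definition rep_center :: "('a, 'b) monoid_scheme \<Rightarrow> ('a \<Rightarrow> complex mat) \<Rightarrow> 'a set" where
  "rep_center G \<rho> = {g \<in> carrier G. \<forall>h \<in> carrier G. \<rho> g * \<rho> h = \<rho> h * \<rho> g}"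

lemma kernel_GL: "kernel G (GL n) \<rho> = {g \<in> carrier G. \<rho> g = 1\<^sub>m n}"
  by (simp add: kernel_def)

lemma rep_center_normal:
  assumes "group G" and "is_rep G n \<rho>"
  shows "rep_center G \<rho> \<lhd> G"
  using group_hom.centralising_preimage_normal[OF rep_group_hom[OF assms]]
  by (simp add: rep_center_def)

lemma derived_subset_rep_kernel_iff:
  assumes "group G" and "is_rep G n \<rho>"
  shows "derived G (carrier G) \<subseteq> kernel G (GL n) \<rho> \<longleftrightarrow> rep_center G \<rho> = carrier G"
  using group_hom.derived_subset_kernel_iff[OF rep_group_hom[OF assms]]
  by (auto simp: rep_center_def)

lemma irr_rep_is_rep: "is_irr_rep G n \<rho> \<Longrightarrow> is_rep G n \<rho>"
  unfolding is_irr_rep_def by simp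

lemma group_center_subset_rep_center:
  assumes "is_rep G n \<rho>"
  shows "group_center G \<subseteq> rep_center G \<rho>"
proof
  fix z assume "z \<in> group_center G"
  hence z: "z \<in> carrier G" and comm: "\<And>h. h \<in> carrier G \<Longrightarrow> z \<otimes>\<^bsub>G\<^esub> h = h \<otimes>\<^bsub>G\<^esub> z"
    unfolding group_center_def by auto
  have "\<rho> z * \<rho> h = \<rho> h * \<rho> z" if h: "h \<in> carrier G" for h
    using comm[OF h] rep_mult[OF assms z h] rep_mult[OF assms h z] by simp
  thus "z \<in> rep_center G \<rho>" using z unfolding rep_center_def by blast
qed

section \<open>Schur's lemma and the centre of a character\<close>

lemma is_subspace_eigenspace:
  assumes A: "A \<in> carrier_mat n n"
  shows "is_subspace n {v \<in> carrier_vec n. A *\<^sub>v v = c \<cdot>\<^sub>v v}"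
  unfolding is_subspace_def
proof (intro conjI ballI allI)
  fix v w assume "v \<in> {v \<in> carrier_vec n. A *\<^sub>v v = c \<cdot>\<^sub>v v}" "w \<in> {v \<in> carrier_vec n. A *\<^sub>v v = c \<cdot>\<^sub>v v}"
  thus "v + w \<in> {v \<in> carrier_vec n. A *\<^sub>v v = c \<cdot>\<^sub>v v}"
    using A by (auto simp: mult_add_distrib_mat_vec smult_add_distrib_vec)
next
  fix d v assume "v \<in> {v \<in> carrier_vec n. A *\<^sub>v v = c \<cdot>\<^sub>v v}"
  thus "d \<cdot>\<^sub>v v \<in> {v \<in> carrier_vec n. A *\<^sub>v v = c \<cdot>\<^sub>v v}"
    using A by (auto simp: mult_mat_vec smult_smult_assoc mult.commute)
qed (use A in auto)

lemma commuting_mat_preserves_eigenspace: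
  fixes A B :: "'a :: field mat"
  assumes A: "A \<in> carrier_mat n n" and B: "B \<in> carrier_mat n n" and AB: "A * B = B * A"
    and v: "v \<in> carrier_vec n" and Av: "A *\<^sub>v v = c \<cdot>\<^sub>v v"
  shows "A *\<^sub>v (B *\<^sub>v v) = c \<cdot>\<^sub>v (B *\<^sub>v v)"
proof -
  have "A *\<^sub>v (B *\<^sub>v v) = (B * A) *\<^sub>v v"
    using A B v AB by (simp flip: assoc_mult_mat_vec)
  also have "\<dots> = c \<cdot>\<^sub>v (B *\<^sub>v v)"
    using A B v by (simp add: assoc_mult_mat_vec Av mult_mat_vec[OF B v])
  finally show ?thesis .
qed

lemma exists_eigenvector:
  fixes A :: "complex mat"
  assumes A: "A \<in> carrier_mat n n" and n: "0 < n"
  shows "\<exists>c v. eigenvector A v c"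
proof -
  obtain as where cp: "char_poly A = (\<Prod>a\<leftarrow>as. [:- a, 1:])"
    using char_poly_factorized[OF A] by auto
  have "as \<noteq> []"
    using degree_monic_char_poly[OF A] n cp by auto
  then obtain c where "c \<in> set as" by (meson list.set_sel(1))
  hence "poly (char_poly A) c = 0" unfolding cp by (rule linear_poly_root)
  hence "eigenvalue A c" using eigenvalue_root_char_poly[OF A] by simp
  thus ?thesis unfolding eigenvalue_def by blast
qed

lemma schur_lemma:
  assumes irr: "is_irr_rep G n \<rho>" and A: "A \<in> carrier_mat n n"
    and comm: "\<And>h. h \<in> carrier G \<Longrightarrow> A * \<rho> h = \<rho> h * A"
  shows "\<exists>c. A = c \<cdot>\<^sub>m 1\<^sub>m n"
proof -
  have rep: "is_rep G n \<rho>" by (rule irr_rep_is_rep[OF irr])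
  obtain c v where v: "eigenvector A v c"
    using exists_eigenvector[OF A rep_degree_pos[OF rep]] by blast
  define W where "W = {v \<in> carrier_vec n. A *\<^sub>v v = c \<cdot>\<^sub>v v}"
  have "is_subspace n W"
    unfolding W_def by (rule is_subspace_eigenspace[OF A])
  moreover have "\<rho> h *\<^sub>v w \<in> W" if h: "h \<in> carrier G" and w: "w \<in> W" for h w
    using commuting_mat_preserves_eigenspace[OF A rep_carrier[OF rep h] comm[OF h]]
      mult_mat_vec_carrier[OF rep_carrier[OF rep h]] w
    unfolding W_def by blast
  moreover have "v \<in> W" "v \<noteq> 0\<^sub>v n"
    using v A unfolding W_def eigenvector_def by auto
  ultimately have W: "W = carrier_vec n"
    using irr unfolding is_irr_rep_def by blast
  have "A = c \<cdot>\<^sub>m 1\<^sub>m n"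
  proof (rule eq_matI)
    fix i j assume "i < dim_row (c \<cdot>\<^sub>m 1\<^sub>m n)" "j < dim_col (c \<cdot>\<^sub>m 1\<^sub>m n)"
    hence ij: "i < n" "j < n" by auto
    have "A *\<^sub>v unit_vec n j = c \<cdot>\<^sub>v unit_vec n j"
      using W unit_vec_carrier[of n j] unfolding W_def by blast
    hence "col A j = c \<cdot>\<^sub>v unit_vec n j"
      using mult_unit_vec_eq_col[OF A ij(2)] by simp
    hence "col A j $ i = (c \<cdot>\<^sub>v unit_vec n j) $ i" by simp
    thus "A $$ (i, j) = (c \<cdot>\<^sub>m 1\<^sub>m n) $$ (i, j)"
      using A ij by simp
  qed (use A in auto)
  thus ?thesis by blast
qed

lemma card_carrier_pos: "group G \<Longrightarrow> finite (carrier G) \<Longrightarrow> 0 < card (carrier G)"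
  by (metis card_gt_0_iff empty_iff group.is_monoid monoid.one_closed)

lemma rep_scalar_norm_eq_one:
  assumes G: "group G" and fin: "finite (carrier G)" and rep: "is_rep G n \<rho>"
    and g: "g \<in> carrier G" and c: "\<rho> g = c \<cdot>\<^sub>m 1\<^sub>m n"
  shows "cmod c = 1"
proof -
  have n: "0 < n" by (rule rep_degree_pos[OF rep])
  have "(c ^ card (carrier G)) \<cdot>\<^sub>m (1\<^sub>m n :: complex mat) = 1\<^sub>m n"
    using rep_pow_order[OF G fin rep g] unfolding c smult_one_pow_mat .
  hence "((c ^ card (carrier G)) \<cdot>\<^sub>m (1\<^sub>m n :: complex mat)) $$ (0, 0) = 1\<^sub>m n $$ (0, 0)"
    by (rule arg_cong)
  hence "c ^ card (carrier G) = 1"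
    using n by simp
  hence "cmod c = 1 \<or> card (carrier G) = 0"
    by (rule power_eq_1_iff)
  thus ?thesis
    using card_carrier_pos[OF G fin] by simp
qed

lemma rep_center_iff_norm_trace:
  assumes G: "group G" and fin: "finite (carrier G)" and irr: "is_irr_rep G n \<rho>"
    and g: "g \<in> carrier G"
  shows "g \<in> rep_center G \<rho> \<longleftrightarrow> cmod (mat_trace (\<rho> g)) = real n"
proof -
  have rep: "is_rep G n \<rho>" by (rule irr_rep_is_rep[OF irr])
  show ?thesis
  proof
    assume "g \<in> rep_center G \<rho>"
    then obtain c where c: "\<rho> g = c \<cdot>\<^sub>m 1\<^sub>m n"
      using schur_lemma[OF irr rep_carrier[OF rep g]] unfolding rep_center_def by blast
    thus "cmod (mat_trace (\<rho> g)) = real n"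
      using rep_scalar_norm_eq_one[OF G fin rep g c] by (simp add: norm_mult)
  next
    assume "cmod (mat_trace (\<rho> g)) = real n"
    then obtain c where c: "\<rho> g = c \<cdot>\<^sub>m 1\<^sub>m n"
      using scalar_if_pow_eq_one_and_norm_trace_eq[OF rep_carrier[OF rep g] rep_degree_pos[OF rep]
          card_carrier_pos[OF G fin] rep_pow_order[OF G fin rep g]] by blast
    have "\<rho> g * \<rho> h = \<rho> h * \<rho> g" if h: "h \<in> carrier G" for h
      using mult_smult_assoc_mat[OF one_carrier_mat rep_carrier[OF rep h], of c]
        mult_smult_distrib[OF rep_carrier[OF rep h] one_carrier_mat, of c] rep_carrier[OF rep h]
      by (simp add: c)
    thus "g \<in> rep_center G \<rho>" using g unfolding rep_center_def by blast
  qed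
qed

definition character :: "('a, 'b) monoid_scheme \<Rightarrow> ('a \<Rightarrow> complex mat) \<Rightarrow> 'a \<Rightarrow> complex" where
  "character G \<rho> = (\<lambda>g. if g \<in> carrier G then mat_trace (\<rho> g) else 0)"

lemma Irr_iff: "\<chi> \<in> Irr G \<longleftrightarrow> (\<exists>n \<rho>. is_irr_rep G n \<rho> \<and> \<chi> = character G \<rho>)"
  unfolding Irr_def character_def by blast

lemma character_one:
  assumes "group G" and "is_rep G n \<rho>"
  shows "character G \<rho> \<one>\<^bsub>G\<^esub> = of_nat n"
  using rep_one[OF assms(2)] group.is_monoid[OF assms(1)] by (simp add: character_def monoid.one_closed)

lemma char_ker_character:
  assumes "group G" and "is_rep G n \<rho>"
  shows "char_ker G (character G \<rho>) = {g \<in> carrier G. mat_trace (\<rho> g) = of_nat n}"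
  unfolding char_ker_def character_one[OF assms] by (auto simp: character_def)

lemma char_center_character:
  assumes G: "group G" and fin: "finite (carrier G)" and irr: "is_irr_rep G n \<rho>"
  shows "char_center G (character G \<rho>) = rep_center G \<rho>"
proof -
  have "complex_of_real r = of_nat n \<longleftrightarrow> r = real n" for r
    by (metis of_real_eq_iff of_real_of_nat_eq)
  hence "char_center G (character G \<rho>) = {g \<in> carrier G. cmod (mat_trace (\<rho> g)) = real n}"
    unfolding char_center_def character_one[OF G irr_rep_is_rep[OF irr]] by (auto simp: character_def)
  also have "\<dots> = rep_center G \<rho>"
  proof -
    have "rep_center G \<rho> \<subseteq> carrier G" by (auto simp: rep_center_def)
    thus ?thesis using rep_center_iff_norm_trace[OF G fin irr] by blast
  qed
  finally show ?thesis .
qed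


section \<open>Irreducible constituents\<close>

lemma (in vec_space) submodule_spanned_by_lin_indpt:
  assumes W: "submodule class_ring W V"
  shows "\<exists>S. finite S \<and> S \<subseteq> W \<and> lin_indpt S \<and> span S = W"
proof -
  have Wc: "W \<subseteq> carrier_vec n"
    using W unfolding submodule_def by (simp add: module_vec_simps)
  have bound: "\<And>A. A \<subseteq> carrier_vec n \<Longrightarrow> lin_indpt A \<Longrightarrow> finite A \<and> card A \<le> n"
    using li_le_dim fin_dim dim_is_n by metis
  have "lin_indpt {}" unfolding lin_dep_def by auto
  then obtain S where "finite S" and S: "maximal S (\<lambda>S. S \<subseteq> W \<and> lin_indpt S)"
    using maximal_exists[of "\<lambda>S. S \<subseteq> W \<and> lin_indpt S" n "{}"] bound Wc by blast
  hence SW: "S \<subseteq> W" and Sli: "lin_indpt S" unfolding maximal_def by auto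
  have Sc: "S \<subseteq> carrier_vec n" using SW Wc by auto
  have "W \<subseteq> span S"
  proof
    fix w assume w: "w \<in> W"
    show "w \<in> span S"
    proof (rule ccontr)
      assume nw: "w \<notin> span S"
      hence "w \<notin> S" using in_own_span[OF Sc] by auto
      moreover have "lin_indpt (S \<union> {w})"
        using lin_dep_iff_in_span[OF Sc Sli _ \<open>w \<notin> S\<close>] nw w Wc by auto
      ultimately show False using S w SW unfolding maximal_def by blast
    qed
  qed
  thus ?thesis using span_is_subset[OF SW W] \<open>finite S\<close> SW Sli by blast
qed

lemma (in vec_space) lin_indpt_extends_to_basis:
  assumes S: "S \<subseteq> carrier_vec n" and li: "lin_indpt S"
  shows "\<exists>T. finite T \<and> S \<subseteq> T \<and> basis T"
proof -
  have bound: "\<And>A. A \<subseteq> carrier_vec n \<Longrightarrow> lin_indpt A \<Longrightarrow> finite A \<and> card A \<le> n"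
    using li_le_dim fin_dim dim_is_n by metis
  obtain T where "finite T" and T: "maximal T (\<lambda>T. S \<subseteq> T \<and> T \<subseteq> carrier_vec n \<and> lin_indpt T)"
    using maximal_exists[of "\<lambda>T. S \<subseteq> T \<and> T \<subseteq> carrier_vec n \<and> lin_indpt T" n S] S li bound
    by blast
  hence "maximal T (\<lambda>T. T \<subseteq> carrier_vec n \<and> lin_indpt T)"
    unfolding maximal_def by (metis order_trans)
  hence "basis T" by (rule max_li_is_basis)
  thus ?thesis using \<open>finite T\<close> T unfolding maximal_def by blast
qed

lemma (in vec_space) coordinates_in_prefix_span:
  assumes L: "set L \<subseteq> carrier_vec n" and dist: "distinct L"
    and v: "v \<in> span (set (take d L))"
  shows "\<exists>c \<in> carrier_vec (length L). mat_of_cols n L *\<^sub>v c = v \<and> (\<forall>i. d \<le> i \<longrightarrow> i < length L \<longrightarrow> c $ i = 0)"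
proof -
  let ?S = "set (take d L)"
  have S: "?S \<subseteq> set L" by (rule set_take_subset)
  obtain a where a: "lincomb a ?S = v"
    using finite_in_span[of ?S] v S L by auto
  define b where "b x = (if x \<in> ?S then a x else 0)" for x
  have "lincomb b (set L) = lincomb b (set L - ?S) + lincomb b ?S"
    using lincomb_vec_diff_add[OF L S] by simp
  also have "lincomb b (set L - ?S) = 0\<^sub>v n"
    using L by (intro lincomb_zero) (auto simp: b_def)
  also have "lincomb b ?S = v"
    using a S L by (subst lincomb_cong[of _ _ _ a]) (auto simp: b_def)
  finally have "lincomb b (set L) = v"
    using v S L span_closed[of ?S] by auto
  moreover have "lincomb b (set L) = mat_of_cols n L *\<^sub>v vec (length L) (\<lambda>i. b (L ! i))"
  proof -
    have "\<forall>w \<in> set L. dim_vec w = n" using L by auto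
    thus ?thesis using lincomb_as_lincomb_list_distinct[OF L dist] lincomb_list_as_mat_mult by simp
  qed
  moreover have "L ! i \<notin> ?S" if "d \<le> i" "i < length L" for i
  proof -
    have "L ! i = drop d L ! (i - d)" using that by simp
    hence "L ! i \<in> set (drop d L)" using that by (metis length_drop diff_less_mono nth_mem)
    thus ?thesis using set_take_disj_set_drop_if_distinct[OF dist order_refl] by blast
  qed
  ultimately show ?thesis
    by (intro bexI[of _ "vec (length L) (\<lambda>i. b (L ! i))"]) (auto simp: b_def)
qed

lemma invertible_if_mult_mat_vec_surj:
  fixes P :: "'a :: field mat"
  assumes P: "P \<in> carrier_mat n n"
    and surj: "\<And>v. v \<in> carrier_vec n \<Longrightarrow> \<exists>c \<in> carrier_vec n. P *\<^sub>v c = v"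
  shows "\<exists>Q \<in> carrier_mat n n. P * Q = 1\<^sub>m n \<and> Q * P = 1\<^sub>m n"
proof -
  define q where "q j = (SOME c. c \<in> carrier_vec n \<and> P *\<^sub>v c = unit_vec n j)" for j
  have q: "q j \<in> carrier_vec n \<and> P *\<^sub>v q j = unit_vec n j" for j
    unfolding q_def by (rule someI_ex) (use surj[of "unit_vec n j"] in auto)
  define Q where "Q = mat_of_cols n (map q [0..<n])"
  have Q: "Q \<in> carrier_mat n n" unfolding Q_def by auto
  have "P * Q = 1\<^sub>m n"
  proof (rule eq_matI)
    fix i j assume "i < dim_row (1\<^sub>m n)" "j < dim_col (1\<^sub>m n)"
    hence ij: "i < n" "j < n" by auto
    have "col (P * Q) j = unit_vec n j"
      using col_mult2[OF P Q ij(2)] q ij by (simp add: Q_def col_mat_of_cols)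
    hence "col (P * Q) j $ i = unit_vec n j $ i" by simp
    thus "(P * Q) $$ (i, j) = 1\<^sub>m n $$ (i, j)"
      using ij P Q by simp
  qed (use P Q in auto)
  thus ?thesis using Q mat_mult_left_right_inverse[OF P Q] by blast
qed

lemma (in vec_space) basis_list_adapted_to_submodule:
  assumes W: "submodule class_ring W V" and nz: "W \<noteq> {0\<^sub>v n}" and np: "W \<noteq> carrier_vec n"
  shows "\<exists>L d. distinct L \<and> set L \<subseteq> carrier_vec n \<and> length L = n \<and> span (set L) = carrier_vec n
    \<and> 0 < d \<and> d < n \<and> set (take d L) \<subseteq> W \<and> span (set (take d L)) = W"
proof -
  have Wc: "W \<subseteq> carrier_vec n"
    using W unfolding submodule_def by (simp add: module_vec_simps)
  obtain S where "finite S" and SW: "S \<subseteq> W" and "lin_indpt S" and spanS: "span S = W"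
    using submodule_spanned_by_lin_indpt[OF W] by blast
  then obtain T where "finite T" and ST: "S \<subseteq> T" and T: "basis T"
    using lin_indpt_extends_to_basis[of S] Wc by blast
  have Tc: "T \<subseteq> carrier_vec n" and spanT: "span T = carrier_vec n"
    using T unfolding basis_def by auto
  obtain ws us where ws: "set ws = S" "distinct ws" and us: "set us = T - S" "distinct us"
    using finite_distinct_list \<open>finite S\<close> \<open>finite T\<close> by (metis finite_Diff)
  define L where "L = ws @ us"
  define d where "d = length ws"
  have Ldist: "distinct L" and LT: "set L = T" and Lc: "set L \<subseteq> carrier_vec n"
    using ws us ST Tc unfolding L_def by auto
  have Llen: "length L = n"
    using distinct_card[OF Ldist] LT dim_basis[OF \<open>finite T\<close> T] dim_is_n by simp
  have take_d: "set (take d L) = S" using ws unfolding L_def d_def by simp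
  have "S \<noteq> {}" using spanS nz span_empty by auto
  hence "0 < d" using ws unfolding d_def by auto
  moreover have "S \<noteq> T" using spanS spanT np by auto
  hence "d < n"
    using ws Llen ST \<open>finite T\<close> distinct_card[OF ws(2)] distinct_card[OF Ldist] LT
    unfolding d_def by (metis psubsetI psubset_card_mono)
  ultimately show ?thesis
    using Ldist Lc Llen LT spanT take_d SW spanS by (intro exI[of _ L] exI[of _ d]) simp
qed

lemma subspace_block_triangularize:
  assumes W: "is_subspace n W" and nz: "W \<noteq> {0\<^sub>v n}" and np: "W \<noteq> carrier_vec n"
  shows "\<exists>d P Q. 0 < d \<and> d < n \<and> P \<in> carrier_mat n n \<and> Q \<in> carrier_mat n n
     \<and> P * Q = 1\<^sub>m n \<and> Q * P = 1\<^sub>m n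
     \<and> (\<forall>A \<in> carrier_mat n n. (\<forall>w \<in> W. A *\<^sub>v w \<in> W) \<longrightarrow>
          (\<forall>i j. d \<le> i \<longrightarrow> i < n \<longrightarrow> j < d \<longrightarrow> (Q * A * P) $$ (i, j) = 0))"
proof -
  interpret V: vec_space "TYPE(complex)" n .
  have "LinearCombinations.submodule class_ring W V.V"
    using W V.module_axioms unfolding LinearCombinations.submodule_def is_subspace_def
    by (auto simp: module_vec_simps class_ring_simps)
  then obtain L d where Ldist: "distinct L" and Lc: "set L \<subseteq> carrier_vec n" and Llen: "length L = n"
    and spanL: "V.span (set L) = carrier_vec n" and d: "0 < d" "d < n"
    and LW: "set (take d L) \<subseteq> W" and spanW: "V.span (set (take d L)) = W"
    using V.basis_list_adapted_to_submodule[OF _ nz np] by blast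
  define P where "P = mat_of_cols n L"
  have P: "P \<in> carrier_mat n n" unfolding P_def using Llen by auto
  have coords: "\<exists>c \<in> carrier_vec n. P *\<^sub>v c = v \<and> (\<forall>i. e \<le> i \<longrightarrow> i < n \<longrightarrow> c $ i = 0)"
    if "v \<in> V.span (set (take e L))" for v e
    using V.coordinates_in_prefix_span[OF Lc Ldist that] Llen unfolding P_def by simp
  have "\<exists>c \<in> carrier_vec n. P *\<^sub>v c = v" if "v \<in> carrier_vec n" for v
    using coords[of v n] that spanL Llen by auto
  then obtain Q where Q: "Q \<in> carrier_mat n n" and PQ: "P * Q = 1\<^sub>m n" and QP: "Q * P = 1\<^sub>m n"
    using invertible_if_mult_mat_vec_surj[OF P] by blast
  have "(Q * A * P) $$ (i, j) = 0"
    if A: "A \<in> carrier_mat n n" and inv: "\<forall>w \<in> W. A *\<^sub>v w \<in> W" and i: "d \<le> i" "i < n" and j: "j < d"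
    for A i j
  proof -
    have jn: "j < n" using j d by simp
    have "L ! j \<in> carrier_vec n" using Lc nth_mem[of j L] jn Llen by auto
    hence "col P j = L ! j" using jn Llen unfolding P_def by (simp add: col_mat_of_cols)
    moreover have "take d L ! j \<in> set (take d L)" using j d Llen by (intro nth_mem) simp
    ultimately have "col P j \<in> W" using j LW by auto
    hence "A *\<^sub>v col P j \<in> V.span (set (take d L))" using inv spanW by simp
    then obtain c where c: "c \<in> carrier_vec n" "P *\<^sub>v c = A *\<^sub>v col P j"
      "\<forall>i. d \<le> i \<longrightarrow> i < n \<longrightarrow> c $ i = 0"
      using coords by blast
    have "col (Q * A * P) j = Q *\<^sub>v col (A * P) j"
      using assoc_mult_mat[OF Q A P] col_mult2[OF Q mult_carrier_mat[OF A P] jn] by simp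
    also have "\<dots> = Q *\<^sub>v (P *\<^sub>v c)" using col_mult2[OF A P jn] c(2) by simp
    also have "\<dots> = c" using assoc_mult_mat_vec[OF Q P c(1)] QP c(1) by simp
    finally have "col (Q * A * P) j $ i = c $ i" by simp
    thus ?thesis using c i j d Q A P by simp
  qed
  thus ?thesis using d P Q PQ QP by blast
qed


definition block_upper_triangular :: "nat \<Rightarrow> 'a :: zero mat \<Rightarrow> bool" where
  "block_upper_triangular d A \<longleftrightarrow> (\<forall>i j. d \<le> i \<longrightarrow> i < dim_row A \<longrightarrow> j < d \<longrightarrow> A $$ (i, j) = 0)"

definition upper_left_block :: "nat \<Rightarrow> 'a mat \<Rightarrow> 'a mat" where
  "upper_left_block d A = mat d d (\<lambda>(i, j). A $$ (i, j))"

definition upper_right_block :: "nat \<Rightarrow> 'a mat \<Rightarrow> 'a mat" where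
  "upper_right_block d A = mat d (dim_col A - d) (\<lambda>(i, j). A $$ (i, j + d))"

definition lower_right_block :: "nat \<Rightarrow> 'a mat \<Rightarrow> 'a mat" where
  "lower_right_block d A = mat (dim_row A - d) (dim_col A - d) (\<lambda>(i, j). A $$ (i + d, j + d))"

lemma block_upper_triangular_eq_four_block_mat:
  assumes A: "A \<in> carrier_mat n n" and d: "d \<le> n" and bt: "block_upper_triangular d A"
  shows "A = four_block_mat (upper_left_block d A) (upper_right_block d A)
    (0\<^sub>m (n - d) d) (lower_right_block d A)"
  using A d bt
  by (intro eq_matI) (auto simp: block_upper_triangular_def upper_left_block_def
      upper_right_block_def lower_right_block_def)

lemma blocks_four_block_mat:
  assumes "A \<in> carrier_mat d d" "B \<in> carrier_mat d m" "D \<in> carrier_mat m m"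
  shows "upper_left_block d (four_block_mat A B (0\<^sub>m m d) D) = A"
    and "lower_right_block d (four_block_mat A B (0\<^sub>m m d) D) = D"
    and "block_upper_triangular d (four_block_mat A B (0\<^sub>m m d) D)"
  using assms by (auto intro!: eq_matI simp: block_upper_triangular_def upper_left_block_def
      lower_right_block_def)

lemma blocks_one_mat:
  assumes "d \<le> n"
  shows "upper_left_block d (1\<^sub>m n) = 1\<^sub>m d" and "lower_right_block d (1\<^sub>m n) = 1\<^sub>m (n - d)"
    and "block_upper_triangular d (1\<^sub>m n)"
proof -
  obtain m where n: "n = d + m" using assms le_Suc_ex by blast
  show "upper_left_block d (1\<^sub>m n) = 1\<^sub>m d" and "lower_right_block d (1\<^sub>m n) = 1\<^sub>m (n - d)"
    and "block_upper_triangular d (1\<^sub>m n)"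
    using blocks_four_block_mat[of "1\<^sub>m d" d "0\<^sub>m d m" m "1\<^sub>m m"] unfolding n by simp_all
qed

lemma block_upper_triangular_mult:
  fixes A B :: "'a :: semiring_1 mat"
  assumes A: "A \<in> carrier_mat n n" and B: "B \<in> carrier_mat n n" and d: "d \<le> n"
    and bA: "block_upper_triangular d A" and bB: "block_upper_triangular d B"
  shows "block_upper_triangular d (A * B)"
    and "upper_left_block d (A * B) = upper_left_block d A * upper_left_block d B"
    and "lower_right_block d (A * B) = lower_right_block d A * lower_right_block d B"
proof -
  let ?A1 = "upper_left_block d A" and ?A2 = "upper_right_block d A" and ?A4 = "lower_right_block d A"
  let ?B1 = "upper_left_block d B" and ?B2 = "upper_right_block d B" and ?B4 = "lower_right_block d B"
  have carriers: "?A1 \<in> carrier_mat d d" "?A2 \<in> carrier_mat d (n - d)" "?A4 \<in> carrier_mat (n - d) (n - d)"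
    "?B1 \<in> carrier_mat d d" "?B2 \<in> carrier_mat d (n - d)" "?B4 \<in> carrier_mat (n - d) (n - d)"
    using A B by (auto simp: upper_left_block_def upper_right_block_def lower_right_block_def)
  have "A * B = four_block_mat ?A1 ?A2 (0\<^sub>m (n - d) d) ?A4 * four_block_mat ?B1 ?B2 (0\<^sub>m (n - d) d) ?B4"
    using block_upper_triangular_eq_four_block_mat[OF A d bA]
      block_upper_triangular_eq_four_block_mat[OF B d bB] by simp
  also have "\<dots> = four_block_mat (?A1 * ?B1) (?A1 * ?B2 + ?A2 * ?B4) (0\<^sub>m (n - d) d) (?A4 * ?B4)"
    using carriers by (subst mult_four_block_mat[of _ d d _ "n - d" _ "n - d"]) auto
  finally have AB: "A * B = \<dots>" .
  have "?A1 * ?B1 \<in> carrier_mat d d" "?A1 * ?B2 + ?A2 * ?B4 \<in> carrier_mat d (n - d)"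
    "?A4 * ?B4 \<in> carrier_mat (n - d) (n - d)" using carriers by auto
  note blocks = blocks_four_block_mat[OF this]
  show "block_upper_triangular d (A * B)"
    and "upper_left_block d (A * B) = ?A1 * ?B1"
    and "lower_right_block d (A * B) = ?A4 * ?B4"
    unfolding AB by (fact blocks)+
qed

lemma mat_trace_four_block_mat:
  assumes A: "A \<in> carrier_mat d d" and D: "D \<in> carrier_mat m m"
  shows "mat_trace (four_block_mat A B C D) = mat_trace A + mat_trace D"
proof -
  let ?M = "four_block_mat A B C D"
  have split: "(\<Sum>i<d + m. f i) = (\<Sum>i<d. f i) + (\<Sum>i<m. f (i + d))" for f :: "nat \<Rightarrow> complex"
    using sum.atLeastLessThan_concat[of 0 d "d + m" f] sum.shift_bounds_nat_ivl[of f 0 d m]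
    by (simp add: lessThan_atLeast0 add.commute)
  have "dim_row ?M = d + m" using A D by simp
  hence "mat_trace ?M = (\<Sum>i<d. ?M $$ (i, i)) + (\<Sum>i<m. ?M $$ (i + d, i + d))"
    unfolding mat_trace_def by (simp only: split)
  also have "\<dots> = mat_trace A + mat_trace D"
    using A D by (simp add: mat_trace_def)
  finally show ?thesis .
qed

lemma mat_trace_block_upper_triangular:
  assumes "A \<in> carrier_mat n n" and "d \<le> n" and "block_upper_triangular d A"
  shows "mat_trace A = mat_trace (upper_left_block d A) + mat_trace (lower_right_block d A)"
  using mat_trace_four_block_mat block_upper_triangular_eq_four_block_mat[OF assms] assms(1)
  by (metis carrier_matD upper_left_block_def lower_right_block_def mat_carrier)

lemma rep_conjugate:
  assumes rep: "is_rep G n \<rho>" and P: "P \<in> carrier_mat n n" and Q: "Q \<in> carrier_mat n n"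
    and PQ: "P * Q = 1\<^sub>m n" and QP: "Q * P = 1\<^sub>m n"
  shows "is_rep G n (\<lambda>g. Q * \<rho> g * P)"
    and "g \<in> carrier G \<Longrightarrow> mat_trace (Q * \<rho> g * P) = mat_trace (\<rho> g)"
proof -
  note car = rep_carrier[OF rep]
  have "Q * \<rho> (g \<otimes>\<^bsub>G\<^esub> h) * P = (Q * \<rho> g * P) * (Q * \<rho> h * P)"
    if g: "g \<in> carrier G" and h: "h \<in> carrier G" for g h
  proof -
    have "Q * \<rho> (g \<otimes>\<^bsub>G\<^esub> h) * P = Q * (\<rho> g * (P * Q) * \<rho> h) * P"
      using rep_mult[OF rep g h] PQ car[OF g] by simp
    also have "\<dots> = (Q * \<rho> g * P) * (Q * \<rho> h * P)"
      using car[OF g] car[OF h] P Q by (simp add: assoc_mult_mat[of _ n n _ n _ n])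
    finally show ?thesis .
  qed
  thus "is_rep G n (\<lambda>g. Q * \<rho> g * P)"
    using rep P Q QP car unfolding is_rep_def by auto
next
  assume g: "g \<in> carrier G"
  have "P * (Q * \<rho> g * P) * Q = (P * Q) * \<rho> g * (P * Q)"
    using rep_carrier[OF rep g] P Q by (simp add: assoc_mult_mat[of _ n n _ n _ n])
  hence "similar_mat_wit (\<rho> g) (Q * \<rho> g * P) P Q"
    using rep_carrier[OF rep g] P Q PQ QP by (intro similar_mat_witI[of _ _ n]) auto
  thus "mat_trace (Q * \<rho> g * P) = mat_trace (\<rho> g)"
    by (simp add: mat_trace_similar_mat_wit)
qed

lemma rep_diagonal_blocks:
  assumes rep: "is_rep G n \<rho>" and d: "0 < d" "d < n"
    and bt: "\<And>g. g \<in> carrier G \<Longrightarrow> block_upper_triangular d (\<rho> g)"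
  shows "is_rep G d (\<lambda>g. upper_left_block d (\<rho> g))"
    and "is_rep G (n - d) (\<lambda>g. lower_right_block d (\<rho> g))"
proof -
  note mult = block_upper_triangular_mult[OF rep_carrier[OF rep] rep_carrier[OF rep] _ bt bt]
  have "upper_left_block d (\<rho> g) \<in> carrier_mat d d"
    and "lower_right_block d (\<rho> g) \<in> carrier_mat (n - d) (n - d)" if "g \<in> carrier G" for g
    using rep_carrier[OF rep that] by (auto simp: upper_left_block_def lower_right_block_def)
  thus "is_rep G d (\<lambda>g. upper_left_block d (\<rho> g))"
    and "is_rep G (n - d) (\<lambda>g. lower_right_block d (\<rho> g))"
    unfolding is_rep_def using d rep_one[OF rep] rep_mult[OF rep] blocks_one_mat[of d n] mult(2,3)
    by auto
qed

lemma reducible_rep_splits: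
  assumes rep: "is_rep G n \<rho>" and W: "is_subspace n W" "W \<noteq> {0\<^sub>v n}" "W \<noteq> carrier_vec n"
    and inv: "\<forall>g \<in> carrier G. \<forall>w \<in> W. \<rho> g *\<^sub>v w \<in> W"
  shows "\<exists>d \<rho>1 \<rho>2. 0 < d \<and> d < n \<and> is_rep G d \<rho>1 \<and> is_rep G (n - d) \<rho>2
    \<and> (\<forall>g \<in> carrier G. mat_trace (\<rho> g) = mat_trace (\<rho>1 g) + mat_trace (\<rho>2 g))
    \<and> (\<forall>g. \<rho> g = 1\<^sub>m n \<longrightarrow> \<rho>1 g = 1\<^sub>m d \<and> \<rho>2 g = 1\<^sub>m (n - d))"
proof -
  obtain d P Q where d: "0 < d" "d < n" and P: "P \<in> carrier_mat n n" and Q: "Q \<in> carrier_mat n n"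
    and PQ: "P * Q = 1\<^sub>m n" and QP: "Q * P = 1\<^sub>m n"
    and zero: "\<forall>A \<in> carrier_mat n n. (\<forall>w \<in> W. A *\<^sub>v w \<in> W) \<longrightarrow>
      (\<forall>i j. d \<le> i \<longrightarrow> i < n \<longrightarrow> j < d \<longrightarrow> (Q * A * P) $$ (i, j) = 0)"
    using subspace_block_triangularize[OF W] by blast
  define \<sigma> where "\<sigma> g = Q * \<rho> g * P" for g
  have \<sigma>: "is_rep G n \<sigma>" and tr: "\<And>g. g \<in> carrier G \<Longrightarrow> mat_trace (\<sigma> g) = mat_trace (\<rho> g)"
    unfolding \<sigma>_def using rep_conjugate[OF rep P Q PQ QP] by auto
  have bt: "block_upper_triangular d (\<sigma> g)" if g: "g \<in> carrier G" for g
    using zero rep_carrier[OF rep g] inv g P Q unfolding block_upper_triangular_def \<sigma>_def by auto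
  have "mat_trace (\<rho> g) = mat_trace (upper_left_block d (\<sigma> g)) + mat_trace (lower_right_block d (\<sigma> g))"
    if g: "g \<in> carrier G" for g
    using tr[OF g] mat_trace_block_upper_triangular[OF rep_carrier[OF \<sigma> g] _ bt[OF g]] d by simp
  moreover have "\<sigma> g = 1\<^sub>m n" if "\<rho> g = 1\<^sub>m n" for g
    using that Q QP by (simp add: \<sigma>_def)
  ultimately show ?thesis
    using rep_diagonal_blocks[OF \<sigma> d bt] blocks_one_mat[of d n] d
    by (intro exI[of _ d] exI[of _ "\<lambda>g. upper_left_block d (\<sigma> g)"]
        exI[of _ "\<lambda>g. lower_right_block d (\<sigma> g)"]) auto
qed

text \<open>The trace splits over the two diagonal blocks of a reducible representation, so one of
  them keeps the defect.\<close>

lemma exists_irr_constituent_with_nontrivial_trace: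
  assumes "is_rep G n \<rho>" and "\<forall>x \<in> N. \<rho> x = 1\<^sub>m n"
    and "g \<in> carrier G" and "mat_trace (\<rho> g) \<noteq> of_nat n"
  shows "\<exists>n \<rho>. is_irr_rep G n \<rho> \<and> (\<forall>x \<in> N. \<rho> x = 1\<^sub>m n) \<and> (\<exists>g \<in> carrier G. mat_trace (\<rho> g) \<noteq> of_nat n)"
  using assms
proof (induction n arbitrary: \<rho> rule: less_induct)
  case (less n)
  show ?case
  proof (cases "is_irr_rep G n \<rho>")
    case True
    thus ?thesis using less.prems by blast
  next
    case False
    then obtain W where W: "is_subspace n W" "W \<noteq> {0\<^sub>v n}" "W \<noteq> carrier_vec n"
      and inv: "\<forall>g \<in> carrier G. \<forall>w \<in> W. \<rho> g *\<^sub>v w \<in> W"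
      using less.prems(1) unfolding is_irr_rep_def by blast
    then obtain d \<rho>1 \<rho>2 where d: "0 < d" "d < n" and reps: "is_rep G d \<rho>1" "is_rep G (n - d) \<rho>2"
      and tr: "\<forall>g \<in> carrier G. mat_trace (\<rho> g) = mat_trace (\<rho>1 g) + mat_trace (\<rho>2 g)"
      and triv: "\<forall>g. \<rho> g = 1\<^sub>m n \<longrightarrow> \<rho>1 g = 1\<^sub>m d \<and> \<rho>2 g = 1\<^sub>m (n - d)"
      using reducible_rep_splits[OF less.prems(1)] by blast
    have "mat_trace (\<rho>1 g) \<noteq> of_nat d \<or> mat_trace (\<rho>2 g) \<noteq> of_nat (n - d)"
      using tr less.prems(3,4) d by (auto simp flip: of_nat_add)
    moreover have "\<forall>x \<in> N. \<rho>1 x = 1\<^sub>m d" and "\<forall>x \<in> N. \<rho>2 x = 1\<^sub>m (n - d)"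
      using triv less.prems(2) by auto
    ultimately show ?thesis
      using less.IH[of d \<rho>1] less.IH[of "n - d" \<rho>2] reps d less.prems(3) by auto
  qed
qed

section \<open>Representations that are trivial on a normal subgroup\<close>

definition regular_rep :: "('a, 'b) monoid_scheme \<Rightarrow> 'a list \<Rightarrow> 'a \<Rightarrow> complex mat" where
  "regular_rep H xs h =
    mat (length xs) (length xs) (\<lambda>(i, j). if xs ! i = h \<otimes>\<^bsub>H\<^esub> xs ! j then 1 else 0)"

lemma (in group) regular_rep_mult:
  assumes xs: "set xs = carrier G" "distinct xs" and g: "g \<in> carrier G" and h: "h \<in> carrier G"
  shows "regular_rep G xs (g \<otimes> h) = regular_rep G xs g * regular_rep G xs h"
proof (rule eq_matI)
  let ?k = "length xs" and ?R = "regular_rep G xs"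
  fix i j assume "i < dim_row (?R g * ?R h)" "j < dim_col (?R g * ?R h)"
  hence ij: "i < ?k" "j < ?k" by (auto simp: regular_rep_def)
  have "h \<otimes> xs ! j \<in> set xs" using xs(1) h nth_mem[OF ij(2)] by simp
  then obtain l where l: "l < ?k" "xs ! l = h \<otimes> xs ! j"
    by (auto simp: in_set_conv_nth)
  have col: "?R h $$ (l', j) = (if l' = l then 1 else 0)" if "l' < ?k" for l'
    using nth_eq_iff_index_eq[OF xs(2) that l(1)] l(2) ij that by (auto simp: regular_rep_def)
  have "(?R g * ?R h) $$ (i, j) = (\<Sum>l' \<in> {0..<?k}. ?R g $$ (i, l') * ?R h $$ (l', j))"
    using ij by (simp add: regular_rep_def scalar_prod_def)
  also have "\<dots> = (\<Sum>l' \<in> {0..<?k}. if l' = l then ?R g $$ (i, l) else 0)"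
    using col by (intro sum.cong) auto
  also have "\<dots> = (if xs ! i = g \<otimes> (h \<otimes> xs ! j) then 1 else 0)"
    using ij l by (simp add: regular_rep_def)
  finally show "?R (g \<otimes> h) $$ (i, j) = (?R g * ?R h) $$ (i, j)"
    using ij g h xs(1) nth_mem[OF ij(2)] by (simp add: regular_rep_def m_assoc)
qed (auto simp: regular_rep_def)

lemma (in group) regular_rep:
  assumes xs: "set xs = carrier G" "distinct xs"
  shows "is_rep G (length xs) (regular_rep G xs)"
    and "h \<in> carrier G \<Longrightarrow> h \<noteq> \<one> \<Longrightarrow> mat_trace (regular_rep G xs h) = 0"
proof -
  let ?k = "length xs" and ?R = "regular_rep G xs"
  have mem: "xs ! i \<in> carrier G" if "i < ?k" for i
    using xs(1) that nth_mem by blast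
  have "?R \<one> = 1\<^sub>m ?k"
    by (rule eq_matI) (auto simp: regular_rep_def mem nth_eq_iff_index_eq[OF xs(2)])
  moreover have "0 < ?k"
    using xs(1) one_closed by (cases xs) auto
  ultimately show "is_rep G ?k ?R"
    unfolding is_rep_def using regular_rep_mult[OF xs]
    by (auto simp: Suc_le_eq regular_rep_def)
  assume h: "h \<in> carrier G" "h \<noteq> \<one>"
  hence "xs ! i \<noteq> h \<otimes> xs ! i" if "i < ?k" for i
    using mem[OF that] by simp
  thus "mat_trace (?R h) = 0"
    by (simp add: mat_trace_def regular_rep_def)
qed

lemma rep_comp_group_hom:
  assumes rep: "is_rep H n \<rho>" and f: "group_hom G H f"
  shows "is_rep G n (\<lambda>g. \<rho> (f g))"
  using rep group_hom.hom_closed[OF f] group_hom.hom_mult[OF f] group_hom.hom_one[OF f]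
  unfolding is_rep_def by auto

lemma (in normal) rcos_hom_group_hom: "group_hom G (G Mod H) (\<lambda>a. H #> a)"
  using r_coset_hom_Mod factorgroup_is_group is_group
  by (intro group_hom.intro group_hom_axioms.intro) auto

lemma (in normal) exists_rep_trivial_on_with_nontrivial_trace:
  assumes fin: "finite (carrier G)" and ne: "H \<noteq> carrier G"
  shows "\<exists>n \<rho>. is_rep G n \<rho> \<and> (\<forall>x \<in> H. \<rho> x = 1\<^sub>m n) \<and> (\<exists>g \<in> carrier G. mat_trace (\<rho> g) \<noteq> of_nat n)"
proof -
  interpret Q: group "G Mod H" by (rule factorgroup_is_group)
  have "carrier (G Mod H) \<subseteq> Pow (carrier G)"
    unfolding FactGroup_def RCOSETS_def r_coset_def by auto
  hence "finite (carrier (G Mod H))" using fin by (meson finite_Pow_iff finite_subset)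
  then obtain xs where xs: "set xs = carrier (G Mod H)" "distinct xs"
    using finite_distinct_list by blast
  define \<rho> where "\<rho> g = regular_rep (G Mod H) xs (H #> g)" for g
  have rep: "is_rep G (length xs) \<rho>"
    unfolding \<rho>_def by (rule rep_comp_group_hom[OF Q.regular_rep(1)[OF xs] rcos_hom_group_hom])
  have "\<rho> x = 1\<^sub>m (length xs)" if "x \<in> H" for x
    using that rep_one[OF Q.regular_rep(1)[OF xs]] coset_join2[OF _ subgroup_axioms that]
    by (simp add: \<rho>_def)
  moreover obtain g where g: "g \<in> carrier G" "g \<notin> H" using ne subset by blast
  have "H #> g \<noteq> \<one>\<^bsub>G Mod H\<^esub>"
    using g coset_join1[OF _ g(1) subgroup_axioms] by auto
  hence "mat_trace (\<rho> g) = 0"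
    using Q.regular_rep(2)[OF xs] g(1) r_coset_hom_Mod by (auto simp: \<rho>_def hom_def)
  hence "mat_trace (\<rho> g) \<noteq> of_nat (length xs)"
    using rep_degree_pos[OF rep] by simp
  ultimately show ?thesis using rep g(1) by blast
qed

lemma (in normal) exists_irr_rep_nontrivial_mod:
  assumes "finite (carrier G)" and "H \<noteq> carrier G"
  shows "\<exists>n \<rho>. is_irr_rep G n \<rho> \<and> (\<forall>x \<in> H. \<rho> x = 1\<^sub>m n) \<and> (\<exists>g \<in> carrier G. mat_trace (\<rho> g) \<noteq> of_nat n)"
proof -
  obtain n \<rho> g where "is_rep G n \<rho>" "\<forall>x \<in> H. \<rho> x = 1\<^sub>m n"
    "g \<in> carrier G" "mat_trace (\<rho> g) \<noteq> of_nat n"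
    using exists_rep_trivial_on_with_nontrivial_trace[OF assms] by blast
  thus ?thesis by (rule exists_irr_constituent_with_nontrivial_trace)
qed

section \<open>Normal subgroups containing the centre\<close>

lemma (in group_hom) vimage_normal:
  assumes N: "N \<lhd> H"
  shows "{x \<in> carrier G. h x \<in> N} \<lhd> G"
proof -
  interpret N: normal N H by (rule N)
  have "(\<lambda>a. N #>\<^bsub>H\<^esub> a) \<circ> h \<in> hom G (H Mod N)"
    using Group.hom_compose[OF homh N.r_coset_hom_Mod] .
  hence "group_hom G (H Mod N) (\<lambda>x. N #>\<^bsub>H\<^esub> h x)"
    using N.factorgroup_is_group by (intro group_hom.intro group_hom_axioms.intro) (auto simp: o_def)
  hence "kernel G (H Mod N) (\<lambda>x. N #>\<^bsub>H\<^esub> h x) \<lhd> G"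
    by (rule group_hom.normal_kernel)
  moreover have "kernel G (H Mod N) (\<lambda>x. N #>\<^bsub>H\<^esub> h x) = {x \<in> carrier G. h x \<in> N}"
    using H.coset_join1[OF _ _ N.subgroup_axioms] H.coset_join2[OF _ N.subgroup_axioms]
    by (auto simp: kernel_def)
  ultimately show ?thesis by simp
qed

lemma (in normal) FactGroup_carrier_eq_image: "(\<lambda>a. H #> a) ` carrier G = carrier (G Mod H)"
  unfolding FactGroup_def RCOSETS_def by auto

lemma (in normal) normal_subgroup_above_if_simple_FactGroup:
  assumes simple: "simple_group (G Mod H)" and N: "N \<lhd> G" and HN: "H \<subseteq> N"
  shows "N = H \<or> N = carrier G"
proof -
  interpret N: normal N G by (rule N)
  have "(\<lambda>a. H #> a) ` N \<lhd> G Mod H"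
    by (rule N.surj_hom_normal_subgroup[OF rcos_hom_group_hom FactGroup_carrier_eq_image])
  hence "(\<lambda>a. H #> a) ` N = carrier (G Mod H) \<or> (\<lambda>a. H #> a) ` N = {H}"
    using simple_group.no_real_normal_subgroup[OF simple] by (metis one_FactGroup)
  thus ?thesis
  proof
    assume image: "(\<lambda>a. H #> a) ` N = carrier (G Mod H)"
    have "g \<in> N" if g: "g \<in> carrier G" for g
    proof -
      have "H #> g \<in> (\<lambda>a. H #> a) ` N"
        using FactGroup_carrier_eq_image g image by blast
      then obtain a where a: "a \<in> N" "H #> g = H #> a" by auto
      hence "g \<in> H #> a" using rcos_self[OF g subgroup_axioms] by simp
      then obtain z where "z \<in> H" "g = z \<otimes> a" unfolding r_coset_def by auto
      thus ?thesis using a(1) HN N.m_closed by auto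
    qed
    thus ?thesis using N.subset by blast
  next
    assume image: "(\<lambda>a. H #> a) ` N = {H}"
    have "a \<in> H" if a: "a \<in> N" for a
    proof -
      have "H #> a = H" using image a by blast
      thus ?thesis using coset_join1[OF _ _ subgroup_axioms] a N.subset by blast
    qed
    thus ?thesis using HN by blast
  qed
qed

lemma (in normal) FactGroup_order_gt_one:
  assumes fin: "finite (carrier G)" and ne: "H \<noteq> carrier G"
  shows "1 < Coset.order (G Mod H)"
proof -
  have one: "\<one>\<^bsub>G Mod H\<^esub> \<in> carrier (G Mod H)"
    by (rule monoid.one_closed[OF group.is_monoid[OF factorgroup_is_group]])
  have "carrier (G Mod H) \<subseteq> Pow (carrier G)"
    unfolding FactGroup_def RCOSETS_def r_coset_def by auto
  hence "finite (carrier (G Mod H))" using fin by (meson finite_Pow_iff finite_subset)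
  moreover obtain x where x: "x \<in> carrier (G Mod H)" "x \<noteq> \<one>\<^bsub>G Mod H\<^esub>"
    using fact_group_trivial_iff[OF fin] ne one by blast
  moreover have "{\<one>\<^bsub>G Mod H\<^esub>, x} \<subseteq> carrier (G Mod H)"
    using one x(1) by blast
  ultimately have "card {\<one>\<^bsub>G Mod H\<^esub>, x} \<le> card (carrier (G Mod H))"
    by (intro card_mono)
  thus ?thesis
    using x(2) unfolding Coset.order_def by simp
qed

lemma (in normal) simple_FactGroup_if_no_normal_subgroup_between:
  assumes fin: "finite (carrier G)" and ne: "H \<noteq> carrier G"
    and max: "\<And>N. N \<lhd> G \<Longrightarrow> H \<subseteq> N \<Longrightarrow> N = H \<or> N = carrier G"
  shows "simple_group (G Mod H)"
proof (intro simple_group.intro simple_group_axioms.intro factorgroup_is_group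
    FactGroup_order_gt_one[OF fin ne])
  fix K assume K: "K \<lhd> G Mod H"
  have H_K: "H \<in> K" using subgroup.one_closed[OF normal_imp_subgroup[OF K]] by simp
  have K_sub: "K \<subseteq> carrier (G Mod H)" using subgroup.subset[OF normal_imp_subgroup[OF K]] .
  let ?N = "{x \<in> carrier G. H #> x \<in> K}"
  have "?N \<lhd> G" by (rule group_hom.vimage_normal[OF rcos_hom_group_hom K])
  moreover have "H \<subseteq> ?N"
  proof
    fix x assume x: "x \<in> H"
    hence "H #> x = H" using coset_join2[OF _ subgroup_axioms] subset by auto
    thus "x \<in> ?N" using x subset H_K by auto
  qed
  ultimately have "?N = H \<or> ?N = carrier G" using max by blast
  thus "K = carrier (G Mod H) \<or> K = {\<one>\<^bsub>G Mod H\<^esub>}"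
  proof
    assume N: "?N = H"
    have "k = H" if k: "k \<in> K" for k
    proof -
      obtain a where a: "a \<in> carrier G" "k = H #> a"
        using K_sub k FactGroup_carrier_eq_image by blast
      hence "a \<in> H" using k N by blast
      thus ?thesis using a coset_join2[OF _ subgroup_axioms] by simp
    qed
    hence "K = {H}" using H_K by blast
    thus ?thesis by simp
  next
    assume N: "?N = carrier G"
    have "k \<in> K" if k: "k \<in> carrier (G Mod H)" for k
    proof -
      obtain a where "a \<in> carrier G" "k = H #> a" using k FactGroup_carrier_eq_image by blast
      thus ?thesis using N by blast
    qed
    thus ?thesis using K_sub by blast
  qed
qed

lemma group_center_normal:
  assumes "group G"
  shows "group_center G \<lhd> G"
proof -
  have "(\<lambda>x. x) \<in> hom G G" by (auto simp: hom_def)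
  hence "group_hom G G (\<lambda>x. x)"
    using assms by (intro group_hom.intro group_hom_axioms.intro)
  thus ?thesis
    using group_hom.centralising_preimage_normal unfolding group_center_def by blast
qed

lemma comm_group_iff_group_center:
  assumes G: "group G"
  shows "comm_group G \<longleftrightarrow> group_center G = carrier G"
proof
  assume "comm_group G"
  then interpret comm_group G .
  show "group_center G = carrier G" unfolding group_center_def using m_comm by auto
next
  assume "group_center G = carrier G"
  thus "comm_group G"
    using group.group_comm_groupI[OF G] unfolding group_center_def by blast
qed

section \<open>The subgroup \<open>K(G)\<close>\<close>

lemma rep_kernel_subset_rep_center:
  assumes "is_rep G n \<rho>"
  shows "kernel G (GL n) \<rho> \<subseteq> rep_center G \<rho>"
proof
  fix x assume "x \<in> kernel G (GL n) \<rho>"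
  hence x: "x \<in> carrier G" "\<rho> x = 1\<^sub>m n" by (auto simp: kernel_GL)
  have "\<rho> x * \<rho> h = \<rho> h * \<rho> x" if "h \<in> carrier G" for h
    using rep_carrier[OF assms that] by (simp add: x(2))
  thus "x \<in> rep_center G \<rho>" using x(1) by (simp add: rep_center_def)
qed

lemma rep_kernel_subset_char_ker:
  assumes "group G" and "is_rep G n \<rho>"
  shows "kernel G (GL n) \<rho> \<subseteq> char_ker G (character G \<rho>)"
  by (auto simp: kernel_GL char_ker_character[OF assms])

lemma normal_subgroup_central_if_K_grp_eq_carrier:
  assumes G: "group G" and fin: "finite (carrier G)" and nc: "\<not> comm_group G"
    and K: "K_grp G = carrier G" and N: "N \<lhd> G" and NG: "N \<noteq> carrier G"
  shows "N \<subseteq> group_center G" and "\<not> derived G (carrier G) \<subseteq> N"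
proof -
  obtain n \<rho> g where irr: "is_irr_rep G n \<rho>" and triv: "\<forall>x \<in> N. \<rho> x = 1\<^sub>m n"
    and g: "g \<in> carrier G" "mat_trace (\<rho> g) \<noteq> of_nat n"
    using normal.exists_irr_rep_nontrivial_mod[OF N fin NG] by blast
  have rep: "is_rep G n \<rho>" by (rule irr_rep_is_rep[OF irr])
  have "character G \<rho> \<in> Irr G" using irr unfolding Irr_iff by blast
  moreover have "g \<notin> char_ker G (character G \<rho>)"
    using g by (simp add: char_ker_character[OF G rep])
  moreover have "carrier G \<inter> \<Inter>{char_ker G \<chi> | \<chi>. \<chi> \<in> Irr G \<and> group_center G \<subset> char_center G \<chi>}
      = carrier G"
    using K nc by (simp add: K_grp_def)
  ultimately have "\<not> group_center G \<subset> char_center G (character G \<rho>)"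
    using g(1) by blast
  hence center: "rep_center G \<rho> = group_center G"
    using group_center_subset_rep_center[OF rep] char_center_character[OF G fin irr] by blast
  have "N \<subseteq> carrier G" using subgroup.subset[OF normal_imp_subgroup[OF N]] .
  hence N_kernel: "N \<subseteq> kernel G (GL n) \<rho>"
    using triv by (auto simp: kernel_GL)
  thus "N \<subseteq> group_center G"
    using rep_kernel_subset_rep_center[OF rep] center by blast
  show "\<not> derived G (carrier G) \<subseteq> N"
  proof
    assume "derived G (carrier G) \<subseteq> N"
    hence "rep_center G \<rho> = carrier G"
      using N_kernel derived_subset_rep_kernel_iff[OF G rep] by blast
    thus False using center nc comm_group_iff_group_center[OF G] by simp
  qed
qed

lemma K_grp_eq_carrier_if_quasi_simple:
  assumes G: "group G" and fin: "finite (carrier G)" and qs: "quasi_simple G"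
  shows "K_grp G = carrier G"
proof (cases "comm_group G")
  case nc: False
  let ?Z = "group_center G"
  have Z: "?Z \<lhd> G" and ZG: "?Z \<noteq> carrier G"
    using group_center_normal[OF G] nc comm_group_iff_group_center[OF G] by auto
  have "simple_group (G Mod ?Z)" using qs unfolding quasi_simple_def by blast
  hence maximal: "N = ?Z \<or> N = carrier G" if "N \<lhd> G" "?Z \<subseteq> N" for N
    using normal.normal_subgroup_above_if_simple_FactGroup[OF Z _ that] by blast
  have "carrier G \<subseteq> char_ker G \<chi>" if \<chi>: "\<chi> \<in> Irr G" and bigger: "?Z \<subset> char_center G \<chi>" for \<chi>
  proof -
    obtain n \<rho> where irr: "is_irr_rep G n \<rho>" and \<chi>_eq: "\<chi> = character G \<rho>"
      using \<chi> Irr_iff by blast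
    have rep: "is_rep G n \<rho>" by (rule irr_rep_is_rep[OF irr])
    have "rep_center G \<rho> = carrier G"
      using maximal[OF rep_center_normal[OF G rep]] bigger
      unfolding \<chi>_eq char_center_character[OF G fin irr] by blast
    hence "carrier G \<subseteq> kernel G (GL n) \<rho>"
      using derived_subset_rep_kernel_iff[OF G rep] qs unfolding quasi_simple_def by simp
    thus ?thesis using rep_kernel_subset_char_ker[OF G rep] \<chi>_eq by blast
  qed
  hence "carrier G \<subseteq> \<Inter>{char_ker G \<chi> | \<chi>. \<chi> \<in> Irr G \<and> ?Z \<subset> char_center G \<chi>}"
    by blast
  thus ?thesis unfolding K_grp_def using nc by (simp add: Int_absorb2)
qed (simp add: K_grp_def)

lemma quasi_simple_if_K_grp_eq_carrier:
  assumes G: "group G" and fin: "finite (carrier G)" and nc: "\<not> comm_group G"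
    and K: "K_grp G = carrier G"
  shows "quasi_simple G"
proof -
  note central = normal_subgroup_central_if_K_grp_eq_carrier[OF G fin nc K]
  let ?Z = "group_center G"
  have Z: "?Z \<lhd> G" and ZG: "?Z \<noteq> carrier G"
    using group_center_normal[OF G] nc comm_group_iff_group_center[OF G] by auto
  have perfect: "derived G (carrier G) = carrier G"
    using central(2)[OF group.derived_self_is_normal[OF G]] by blast
  have "simple_group (G Mod ?Z)"
    using normal.simple_FactGroup_if_no_normal_subgroup_between[OF Z fin ZG] central(1) by blast
  moreover have "\<not> comm_group (G Mod ?Z)"
  proof
    assume "comm_group (G Mod ?Z)"
    hence "carrier G \<subseteq> ?Z"
      using group.derived_minimal[OF G Z] perfect by simp
    thus False using ZG unfolding group_center_def by blast
  qed
  ultimately show ?thesis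
    unfolding quasi_simple_def using perfect by blast
qed

theorem lemma2p2:
  fixes G :: "('a, 'b) monoid_scheme"
  assumes "group G" and "finite (carrier G)"
  shows "K_grp G = carrier G \<longleftrightarrow> comm_group G \<or> quasi_simple G"
proof
  assume "K_grp G = carrier G"
  thus "comm_group G \<or> quasi_simple G"
    using quasi_simple_if_K_grp_eq_carrier[OF assms] by blast
next
  assume "comm_group G \<or> quasi_simple G"
  thus "K_grp G = carrier G"
  proof
    assume "comm_group G" thus ?thesis by (simp add: K_grp_def)
  qed (rule K_grp_eq_carrier_if_quasi_simple[OF assms])
qed

end
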